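(* Assume the standing assumptions below, and write $\mathbf{x}^*(\mathbf{a})\in\mathbb{R}^{2n}$ for the unique solution of the fixed-point equation $\mathbf{x}=\mathbf{g}(\mathbf{a},\mathbf{x})$. For $\boldsymbol{\xi}\in\{0,1\}^n$ define the $2n\times 2n$ matrix $$\mathbf{K}_{\boldsymbol{\xi}}=\begin{pmatrix}\operatorname{diag}(\boldsymbol{\xi})\mathbf{M}^s & \operatorname{diag}(\boldsymbol{\xi})\mathbf{M}^d\\ \operatorname{diag}(\mathbf{1}-\boldsymbol{\xi})\mathbf{M}^s & \operatorname{diag}(\mathbf{1}-\boldsymbol{\xi})\mathbf{M}^d\end{pmatrix}.$$ Then the following hold. 1. $\kappa:=\max_{\boldsymbol{\xi}\in\{0,1\}^n}\|\mathbf{K}_{\boldsymbol{\xi}}\|_1<1$. 2. For all $\mathbf{a}_1,\mathbf{a}_2\in(0,\infty)^n$, $$\|\mathbf{x}^*(\mathbf{a}_1)-\mathbf{x}^*(\mathbf{a}_2)\|_1\le (1-\kappa)^{-1}\,\|\mathbf{a}_1-\mathbf{a}_2\|_1.$$ Here $\|\cdot\|_1$ is the $\ell^1$ norm on vectors, and for matrices it is the induced operator norm, i.e. the maximum absolute column sum.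
   Context: Standing model (network valuation with cross-holdings). There are $n$ firms. Cross-holding matrices. $\mathbf{M}^s,\mathbf{M}^d\in\mathbb{R}^{n\times n}$ are matrices of equity and debt cross-holding fractions: firm $i$ holds fraction $M^s_{ij}$ of firm $j$'s equity and fraction $M^d_{ij}$ of firm $j$'s debt. They satisfy: - $M^s_{ii}=M^d_{ii}=0$ for all $i$; - $M^s_{ij},M^d_{ij}\ge 0$ for all $i,j$; - $\sum_i M^s_{ij}<1$ and $\sum_i M^d_{ij}<1$ for every $j$. Asset and debt data. Firm $i$ has external asset value $a_i>0$ and nominal debt $d_i>0$ (fixed). Fixed-point map. For $\mathbf{x}=(\mathbf{s};\mathbf{r})\in\mathbb{R}^{2n}$ (equity values $\mathbf{s}$ stacked over debt recovery values $\mathbf{r}$), define $\mathbf{g}=(g^s_1,\dots,g^s_n,g^r_1,\dots,g^r_n)$ by $$g^s_i(\mathbf{a},\mathbf{x})=\max\Big\{0,\;a_i+\sum_j M^s_{ij}s_j+\sum_j M^d_{ij}r_j-d_i\Big\},$$ $$g^r_i(\mathbf{a},\mathbf{x})=\min\Big\{d_i,\;a_i+\sum_j M^s_{ij}s_j+\sum_j M^d_{ij}r_j\Big\}.$$ For every $\mathbf{a}\in(0,\infty)^n$ the equation $\mathbf{x}=\mathbf{g}(\mathbf{a},\mathbf{x})$ has a unique (nonnegative) solution, denoted $\mathbf{x}^*(\mathbf{a})=(\mathbf{s}^*(\mathbf{a});\mathbf{r}^*(\mathbf{a}))$. *)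

theory Defs
  imports "HOL-Analysis.Analysis"
begin

text \<open>Firms are indexed by a finite type 'n. A vector in R^{2n} is indexed by
 'n + 'n: Inl i is the equity value s_i, Inr i is the debt recovery value r_i.\<close>

definition l1norm :: "real ^ 'k \<Rightarrow> real" where
  "l1norm x = (\<Sum>i\<in>UNIV. \<bar>x $ i\<bar>)"

definition mat_l1norm :: "real ^ 'k ^ 'k \<Rightarrow> real" where
  "mat_l1norm A = Max (range (\<lambda>j. \<Sum>i\<in>UNIV. \<bar>A $ i $ j\<bar>))"

definition gmap :: "real ^ 'n ^ 'n \<Rightarrow> real ^ 'n ^ 'n \<Rightarrow> real ^ 'n \<Rightarrow> real ^ 'n
                     \<Rightarrow> real ^ ('n + 'n) \<Rightarrow> real ^ ('n + 'n)" where
  "gmap Ms Md d a x = (\<chi> k. case k of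
      Inl i \<Rightarrow> max 0 (a $ i + (\<Sum>j\<in>UNIV. Ms $ i $ j * x $ Inl j)
                          + (\<Sum>j\<in>UNIV. Md $ i $ j * x $ Inr j) - d $ i)
    | Inr i \<Rightarrow> min (d $ i) (a $ i + (\<Sum>j\<in>UNIV. Ms $ i $ j * x $ Inl j)
                          + (\<Sum>j\<in>UNIV. Md $ i $ j * x $ Inr j)))"

definition xstar :: "real ^ 'n ^ 'n \<Rightarrow> real ^ 'n ^ 'n \<Rightarrow> real ^ 'n \<Rightarrow> real ^ 'n
                     \<Rightarrow> real ^ ('n + 'n)" where
  "xstar Ms Md d a = (THE x. x = gmap Ms Md d a x)"

text \<open>K_xi for xi in {0,1}^n, xi encoded as a boolean function (True = 1).\<close>
definition Kmat :: "real ^ 'n ^ 'n \<Rightarrow> real ^ 'n ^ 'n \<Rightarrow> ('n \<Rightarrow> bool)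
                    \<Rightarrow> real ^ ('n + 'n) ^ ('n + 'n)" where
  "Kmat Ms Md xi = (\<chi> k l.
     (let w = (case k of Inl i \<Rightarrow> (if xi i then 1 else 0) | Inr i \<Rightarrow> (if xi i then 0 else 1));
          i = (case k of Inl i \<Rightarrow> i | Inr i \<Rightarrow> i)
      in w * (case l of Inl j \<Rightarrow> Ms $ i $ j | Inr j \<Rightarrow> Md $ i $ j)))"

definition kappa :: "real ^ 'n ^ 'n \<Rightarrow> real ^ 'n ^ 'n \<Rightarrow> real" where
  "kappa Ms Md = Max ((\<lambda>xi. mat_l1norm (Kmat Ms Md xi)) ` UNIV)"

end

theory Submission
  imports Defs
begin

text \<open>Writing \<open>v\<^sub>i = a\<^sub>i + \<Sum>\<^sub>j M\<^sup>s\<^sub>i\<^sub>j s\<^sub>j + \<Sum>\<^sub>j M\<^sup>d\<^sub>i\<^sub>j r\<^sub>j\<close> for the value of firm \<open>i\<close>,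
  the pair \<open>(max 0 (v\<^sub>i - d\<^sub>i), min d\<^sub>i v\<^sub>i)\<close> splits \<open>v\<^sub>i\<close>, so the two coordinates of \<open>g\<close>
  belonging to firm \<open>i\<close> move in \<open>\<ell>\<^sup>1\<close> by exactly \<open>|v\<^sub>i - v\<^sub>i'|\<close>. Summing over firms,
  \<open>\<parallel>g(a,x) - g(a',y)\<parallel>\<^sub>1 \<le> \<parallel>a - a'\<parallel>\<^sub>1 + \<kappa> \<parallel>x - y\<parallel>\<^sub>1\<close>, where \<open>\<kappa>\<close> is the largest column sum of
  \<open>M\<^sup>s\<close> and \<open>M\<^sup>d\<close>; this is also the column sum of every \<open>K\<^sub>\<xi>\<close>, since the rows of
  \<open>K\<^sub>\<xi>\<close> distribute each row of \<open>(M\<^sup>s M\<^sup>d)\<close> over the two blocks. Hence \<open>\<kappa> < 1\<close>, \<open>g(a,\<cdot>)\<close> is an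
  \<open>\<ell>\<^sup>1\<close>-contraction with fixed point \<open>x\<^sup>*(a)\<close>, and comparing the fixed points for
  \<open>a\<^sub>1\<close> and \<open>a\<^sub>2\<close> gives \<open>(1 - \<kappa>) \<parallel>x\<^sup>*(a\<^sub>1) - x\<^sup>*(a\<^sub>2)\<parallel>\<^sub>1 \<le> \<parallel>a\<^sub>1 - a\<^sub>2\<parallel>\<^sub>1\<close>.\<close>

lemma sum_UNIV_sum_type:
  fixes f :: "'a::finite + 'b::finite \<Rightarrow> 'c::comm_monoid_add"
  shows "(\<Sum>k\<in>UNIV. f k) = (\<Sum>i\<in>UNIV. f (Inl i)) + (\<Sum>i\<in>UNIV. f (Inr i))"
  using sum.Plus[of "UNIV :: 'a set" "UNIV :: 'b set" f] by (simp add: comp_def)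

lemma abs_sum_weighted_le:
  fixes W :: "'i \<Rightarrow> 'j \<Rightarrow> real"
  assumes "finite I" "finite J" and W_nonneg: "\<And>i j. W i j \<ge> 0"
  shows "(\<Sum>i\<in>I. \<bar>\<Sum>j\<in>J. W i j * v j\<bar>) \<le> (\<Sum>j\<in>J. (\<Sum>i\<in>I. W i j) * \<bar>v j\<bar>)"
proof -
  have "(\<Sum>i\<in>I. \<bar>\<Sum>j\<in>J. W i j * v j\<bar>) \<le> (\<Sum>i\<in>I. \<Sum>j\<in>J. W i j * \<bar>v j\<bar>)"
    by (intro sum_mono order_trans[OF sum_abs]) (simp add: abs_mult W_nonneg)
  also have "\<dots> = (\<Sum>j\<in>J. (\<Sum>i\<in>I. W i j) * \<bar>v j\<bar>)"
    by (subst sum.swap) (simp add: sum_distrib_right)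
  finally show ?thesis .
qed

lemma norm_le_l1norm: "norm x \<le> l1norm x"
  unfolding l1norm_def by (rule norm_le_l1_cart)

lemma l1norm_le_card_mult_norm: "l1norm (x :: real ^ 'k) \<le> real CARD('k) * norm x"
proof -
  have "l1norm x \<le> (\<Sum>i\<in>(UNIV::'k set). norm x)"
    unfolding l1norm_def by (rule sum_mono) (rule component_le_norm_cart)
  then show ?thesis by simp
qed

lemma l1_lipschitz_funpow:
  fixes f :: "real ^ 'k \<Rightarrow> real ^ 'k"
  assumes "0 \<le> K" and lipschitz: "\<And>x y. l1norm (f x - f y) \<le> K * l1norm (x - y)"
  shows "l1norm ((f ^^ m) x - (f ^^ m) y) \<le> K ^ m * l1norm (x - y)"
proof (induction m)
  case (Suc m)
  have "l1norm ((f ^^ Suc m) x - (f ^^ Suc m) y) \<le> K * l1norm ((f ^^ m) x - (f ^^ m) y)"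
    using lipschitz by simp
  also have "\<dots> \<le> K * (K ^ m * l1norm (x - y))"
    using Suc \<open>0 \<le> K\<close> by (rule mult_left_mono)
  finally show ?case by (simp add: mult.assoc)
qed simp

text \<open>The \<open>\<ell>\<^sup>1\<close> norm is not the norm of \<open>real ^ 'k\<close>; but \<open>\<ell>\<^sup>1\<close> and Euclidean norm
  differ by at most the factor \<open>CARD('k)\<close>, so a high enough iterate of an
  \<open>\<ell>\<^sup>1\<close>-contraction is a Euclidean contraction, and its fixed point is fixed by \<open>f\<close>.\<close>

lemma l1_contraction_unique_fixpoint:
  fixes f :: "real ^ 'k \<Rightarrow> real ^ 'k"
  assumes "0 \<le> K" "K < 1" and lipschitz: "\<And>x y. l1norm (f x - f y) \<le> K * l1norm (x - y)"
  shows "\<exists>!x. f x = x"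
proof -
  define N where "N = real CARD('k)"
  have "0 < N" unfolding N_def by simp
  then obtain m where "K ^ m < 1 / N"
    using real_arch_pow_inv[of "1 / N" K] \<open>0 \<le> K\<close> \<open>K < 1\<close> by auto
  then have c_less_1: "K ^ m * N < 1" using \<open>0 < N\<close> by (simp add: field_simps)
  have c_nonneg: "0 \<le> K ^ m * N" using \<open>0 \<le> K\<close> \<open>0 < N\<close> by simp
  have "dist ((f ^^ m) x) ((f ^^ m) y) \<le> (K ^ m * N) * dist x y" for x y
  proof -
    have "dist ((f ^^ m) x) ((f ^^ m) y) \<le> l1norm ((f ^^ m) x - (f ^^ m) y)"
      by (simp add: dist_norm norm_le_l1norm)
    also have "\<dots> \<le> K ^ m * l1norm (x - y)"
      using \<open>0 \<le> K\<close> lipschitz by (rule l1_lipschitz_funpow)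
    also have "\<dots> \<le> K ^ m * (N * norm (x - y))"
      using l1norm_le_card_mult_norm[of "x - y"] \<open>0 \<le> K\<close> unfolding N_def
      by (simp add: mult_left_mono)
    finally show ?thesis by (simp add: dist_norm mult.assoc)
  qed
  then obtain p where p: "(f ^^ m) p = p" and p_unique: "\<And>q. (f ^^ m) q = q \<Longrightarrow> q = p"
    using banach_fix_type[OF c_nonneg c_less_1, of "f ^^ m"] by metis
  have "(f ^^ m) (f p) = f p" by (metis funpow_swap1 p)
  then have "f p = p" by (rule p_unique)
  moreover have "q = p" if "f q = q" for q
  proof (rule p_unique)
    show "(f ^^ m) q = q" using that by (induction m) simp_all
  qed
  ultimately show ?thesis by blast
qed

definition holding :: "real ^ 'n ^ 'n \<Rightarrow> real ^ 'n ^ 'n \<Rightarrow> 'n \<Rightarrow> 'n + 'n \<Rightarrow> real" where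
  "holding Ms Md i l = (case l of Inl j \<Rightarrow> Ms $ i $ j | Inr j \<Rightarrow> Md $ i $ j)"

definition column_holding :: "real ^ 'n ^ 'n \<Rightarrow> real ^ 'n ^ 'n \<Rightarrow> 'n + 'n \<Rightarrow> real" where
  "column_holding Ms Md l = (\<Sum>i\<in>UNIV. holding Ms Md i l)"

definition firm_value :: "real ^ 'n ^ 'n \<Rightarrow> real ^ 'n ^ 'n \<Rightarrow> real ^ 'n
                           \<Rightarrow> real ^ ('n + 'n) \<Rightarrow> 'n \<Rightarrow> real" where
  "firm_value Ms Md a x i = a $ i + (\<Sum>l\<in>UNIV. holding Ms Md i l * x $ l)"

lemma holding_nonneg:
  assumes "\<forall>i j. Ms $ i $ j \<ge> 0" "\<forall>i j. Md $ i $ j \<ge> 0"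
  shows "holding Ms Md i l \<ge> 0"
  using assms by (cases l) (simp_all add: holding_def)

lemma column_abs_sum_Kmat:
  assumes "\<forall>i j. Ms $ i $ j \<ge> 0" "\<forall>i j. Md $ i $ j \<ge> 0"
  shows "(\<Sum>k\<in>UNIV. \<bar>Kmat Ms Md xi $ k $ l\<bar>) = column_holding Ms Md l"
proof -
  have "(\<Sum>k\<in>UNIV. \<bar>Kmat Ms Md xi $ k $ l\<bar>)
      = (\<Sum>i\<in>UNIV. (if xi i then 1 else 0) * holding Ms Md i l)
        + (\<Sum>i\<in>UNIV. (if xi i then 0 else 1) * holding Ms Md i l)"
    by (subst sum_UNIV_sum_type)
       (simp add: Kmat_def Let_def abs_mult holding_nonneg[OF assms] flip: holding_def)
  also have "\<dots> = column_holding Ms Md l"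
    unfolding column_holding_def sum.distrib[symmetric] by (intro sum.cong) simp_all
  finally show ?thesis .
qed

lemma kappa_eq_Max_column_holding:
  assumes "\<forall>i j. Ms $ i $ j \<ge> 0" "\<forall>i j. Md $ i $ j \<ge> 0"
  shows "kappa Ms Md = Max (range (column_holding Ms Md))"
proof -
  have "mat_l1norm (Kmat Ms Md xi) = Max (range (column_holding Ms Md))" for xi
    unfolding mat_l1norm_def column_abs_sum_Kmat[OF assms] ..
  then show ?thesis unfolding kappa_def by (simp add: image_constant_conv)
qed

lemma column_holding_le_kappa:
  assumes "\<forall>i j. Ms $ i $ j \<ge> 0" "\<forall>i j. Md $ i $ j \<ge> 0"
  shows "column_holding Ms Md l \<le> kappa Ms Md"
  unfolding kappa_eq_Max_column_holding[OF assms] by (rule Max_ge) auto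

lemma kappa_nonneg:
  assumes "\<forall>i j. Ms $ i $ j \<ge> 0" "\<forall>i j. Md $ i $ j \<ge> 0"
  shows "0 \<le> kappa Ms Md"
proof -
  have "0 \<le> column_holding Ms Md l" for l
    unfolding column_holding_def by (intro sum_nonneg holding_nonneg[OF assms])
  then show ?thesis using column_holding_le_kappa[OF assms] order_trans by blast
qed

lemma kappa_less_1:
  assumes "\<forall>i j. Ms $ i $ j \<ge> 0" "\<forall>i j. Md $ i $ j \<ge> 0"
    and "\<forall>j. (\<Sum>i\<in>UNIV. Ms $ i $ j) < 1" "\<forall>j. (\<Sum>i\<in>UNIV. Md $ i $ j) < 1"
  shows "kappa Ms Md < 1"
proof -
  have "Max (range (column_holding Ms Md)) \<in> range (column_holding Ms Md)"
    by (rule Max_in) auto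
  moreover have "column_holding Ms Md l < 1" for l
    using assms(3,4) by (cases l) (simp_all add: column_holding_def holding_def)
  ultimately show ?thesis using kappa_eq_Max_column_holding[OF assms(1,2)] by auto
qed

lemma abs_diff_max_min_split:
  fixes t t' d :: real
  shows "\<bar>max 0 (t - d) - max 0 (t' - d)\<bar> + \<bar>min d t - min d t'\<bar> = \<bar>t - t'\<bar>"
  by (auto simp: max_def min_def abs_if)

lemma l1norm_gmap_diff:
  "l1norm (gmap Ms Md d a x - gmap Ms Md d a' y)
     = (\<Sum>i\<in>UNIV. \<bar>firm_value Ms Md a x i - firm_value Ms Md a' y i\<bar>)"
proof -
  have value_eq: "firm_value Ms Md a x i = a $ i + (\<Sum>j\<in>UNIV. Ms $ i $ j * x $ Inl j)
                                               + (\<Sum>j\<in>UNIV. Md $ i $ j * x $ Inr j)"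
    for a x i
    unfolding firm_value_def by (subst sum_UNIV_sum_type) (simp add: holding_def)
  show ?thesis
    unfolding l1norm_def
    by (subst sum_UNIV_sum_type, subst sum.distrib[symmetric])
       (simp add: gmap_def value_eq abs_diff_max_min_split)
qed

lemma gmap_l1_lipschitz:
  assumes nonneg: "\<forall>i j. Ms $ i $ j \<ge> 0" "\<forall>i j. Md $ i $ j \<ge> 0"
  shows "l1norm (gmap Ms Md d a x - gmap Ms Md d a' y)
           \<le> l1norm (a - a') + kappa Ms Md * l1norm (x - y)"
proof -
  have "l1norm (gmap Ms Md d a x - gmap Ms Md d a' y)
      = (\<Sum>i\<in>UNIV. \<bar>(a $ i - a' $ i) + (\<Sum>l\<in>UNIV. holding Ms Md i l * (x $ l - y $ l))\<bar>)"
    unfolding l1norm_gmap_diff firm_value_def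
    by (simp add: algebra_simps sum_subtractf)
  also have "\<dots> \<le> l1norm (a - a') + (\<Sum>i\<in>UNIV. \<bar>\<Sum>l\<in>UNIV. holding Ms Md i l * (x $ l - y $ l)\<bar>)"
    unfolding l1norm_def sum.distrib[symmetric] by (intro sum_mono) (simp add: abs_triangle_ineq)
  also have "\<dots> \<le> l1norm (a - a') + (\<Sum>l\<in>UNIV. column_holding Ms Md l * \<bar>x $ l - y $ l\<bar>)"
    unfolding column_holding_def
    by (intro add_left_mono abs_sum_weighted_le holding_nonneg[OF nonneg]) simp_all
  also have "\<dots> \<le> l1norm (a - a') + (\<Sum>l\<in>UNIV. kappa Ms Md * \<bar>x $ l - y $ l\<bar>)"
    by (intro add_left_mono sum_mono mult_right_mono column_holding_le_kappa[OF nonneg]) simp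
  also have "\<dots> = l1norm (a - a') + kappa Ms Md * l1norm (x - y)"
    by (simp add: l1norm_def sum_distrib_left)
  finally show ?thesis .
qed

lemma xstar_fixpoint:
  assumes nonneg: "\<forall>i j. Ms $ i $ j \<ge> 0" "\<forall>i j. Md $ i $ j \<ge> 0"
    and "kappa Ms Md < 1"
  shows "xstar Ms Md d a = gmap Ms Md d a (xstar Ms Md d a)"
proof -
  have "\<exists>!x. gmap Ms Md d a x = x"
    using gmap_l1_lipschitz[OF nonneg, of d a _ a]
    by (intro l1_contraction_unique_fixpoint[OF kappa_nonneg[OF nonneg] \<open>kappa Ms Md < 1\<close>])
       (simp add: l1norm_def)
  then have "\<exists>!x. x = gmap Ms Md d a x" by metis
  then show ?thesis unfolding xstar_def by (rule theI')
qed

theorem mainTheorem1: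
  fixes Ms Md :: "real ^ 'n ^ 'n" and d :: "real ^ 'n"
  assumes diag_s: "\<forall>i. Ms $ i $ i = 0"
    and diag_d: "\<forall>i. Md $ i $ i = 0"
    and nonneg_s: "\<forall>i j. Ms $ i $ j \<ge> 0"
    and nonneg_d: "\<forall>i j. Md $ i $ j \<ge> 0"
    and colsum_s: "\<forall>j. (\<Sum>i\<in>UNIV. Ms $ i $ j) < 1"
    and colsum_d: "\<forall>j. (\<Sum>i\<in>UNIV. Md $ i $ j) < 1"
    and d_pos: "\<forall>i. d $ i > 0"
  shows "kappa Ms Md < 1 \<and>
    (\<forall>a1 a2 :: real ^ 'n. (\<forall>i. a1 $ i > 0) \<longrightarrow> (\<forall>i. a2 $ i > 0) \<longrightarrow>
       l1norm (xstar Ms Md d a1 - xstar Ms Md d a2)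
         \<le> inverse (1 - kappa Ms Md) * l1norm (a1 - a2))"
proof -
  let ?\<kappa> = "kappa Ms Md"
  have "?\<kappa> < 1" by (rule kappa_less_1[OF nonneg_s nonneg_d colsum_s colsum_d])
  have "l1norm (xstar Ms Md d a1 - xstar Ms Md d a2) \<le> inverse (1 - ?\<kappa>) * l1norm (a1 - a2)"
    for a1 a2
  proof -
    let ?x = "xstar Ms Md d a1" and ?y = "xstar Ms Md d a2"
    have "l1norm (?x - ?y) \<le> l1norm (a1 - a2) + ?\<kappa> * l1norm (?x - ?y)"
      using gmap_l1_lipschitz[OF nonneg_s nonneg_d, of d a1 ?x a2 ?y]
      by (simp flip: xstar_fixpoint[OF nonneg_s nonneg_d \<open>?\<kappa> < 1\<close>])
    then have "(1 - ?\<kappa>) * l1norm (?x - ?y) \<le> l1norm (a1 - a2)" by (simp add: algebra_simps)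
    then show ?thesis using \<open>?\<kappa> < 1\<close> by (simp add: field_simps)
  qed
  with \<open>?\<kappa> < 1\<close> show ?thesis by blast
qed

end
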